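(* Let $t_0\in\mathbb R$ and let $g,h,y$ be non-negative locally integrable functions on $(t_0,\infty)$ such that $dy/dt$ is locally integrable on $(t_0,\infty)$ and $$\frac{dy}{dt}\le g(t)y(t)+h(t)\quad\forall t\ge t_0 .$$ Suppose there are $a_1,a_2,a_3\ge0$ with $\int_t^{t+1}g\,ds\le a_1$, $\int_t^{t+1}h\,ds\le a_2$, $\int_t^{t+1}y\,ds\le a_3$ for all $t\ge t_0$, and that for all $t>t_0$, $\int_{t_0}^t\big(g(s)y(s)+h(s)\big)ds\le P(t)$ for a non-negative function $P$. Then for all $t>t_0$, $$y(t)\le\Big(\frac{a_3}{t-t_0}+2a_2+a_3\Big)e^{a_1}+P(t).$$
   Context: The uniform Gronwall inequality (used as a known fact): under the first set of hypotheses with integrals over windows of length $r>0$ bounded by $a_1,a_2,a_3$, one has $y(t+r)\le(a_3/r+a_2)e^{a_1}$ for all $t\ge t_0$. *)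

theory Defs
  imports "HOL-Analysis.Analysis"
begin

end

theory Submission
  imports Defs
begin

text \<open>For \<open>t0 < s \<le> t\<close> the weak derivative
  gives \<open>y t - y s = \<integral>\<^sub>s\<^sup>t y' \<le> \<integral>\<^bsub>t0\<^esub>\<^sup>t (g y + h) \<le> P t\<close>, so \<open>y t - P t\<close> is a
  lower bound for \<open>y\<close> on \<open>(t0, t]\<close>. Averaging over the last window of length
  \<open>r = min 1 (t - t0)\<close> before \<open>t\<close> gives \<open>y t - P t \<le> a3 / r \<le> a3 / (t - t0) + a3\<close>.\<close>

lemma integral_le_Ioo:
  fixes f g :: "real \<Rightarrow> real"
  assumes "f integrable_on {a..b}" "g integrable_on {a..b}"
    and "\<And>x. x \<in> {a<..<b} \<Longrightarrow> f x \<le> g x"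
  shows "integral {a..b} f \<le> integral {a..b} g"
proof -
  have "integral {a<..<b} f \<le> integral {a<..<b} g"
    using assms by (intro integral_le) (auto simp: integrable_on_Icc_iff_Ioo[symmetric])
  then show ?thesis
    by (simp add: integral_open_interval_real)
qed

lemma integral_subinterval_le:
  fixes f :: "real \<Rightarrow> real"
  assumes f: "f integrable_on {a..b}"
    and nonneg: "\<And>x. x \<in> {a<..<b} \<Longrightarrow> 0 \<le> f x"
    and "a \<le> c" "c \<le> d" "d \<le> b"
  shows "integral {c..d} f \<le> integral {a..b} f"
proof -
  have "f integrable_on {c..d}"
    using integrable_on_subinterval[OF f] assms(3-5) by auto
  then have "integral {c<..<d} f \<le> integral {a<..<b} f"
    using f assms(3-5) nonneg
    by (intro integral_subset_le) (auto simp: integrable_on_Icc_iff_Ioo[symmetric])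
  then show ?thesis
    by (simp add: integral_open_interval_real)
qed

lemma weak_solution_increment_le:
  fixes y y' F :: "real \<Rightarrow> real"
  assumes "t0 \<le> s" "s \<le> t"
    and y_incr: "y t - y s = integral {s..t} y'"
    and y'_int: "y' integrable_on {s..t}"
    and F_int: "F integrable_on {t0..t}"
    and y'_le: "\<And>x. x \<in> {s..t} \<Longrightarrow> y' x \<le> F x"
    and F_nonneg: "\<And>x. x \<in> {t0<..<t} \<Longrightarrow> 0 \<le> F x"
  shows "y t - y s \<le> integral {t0..t} F"
proof -
  have "F integrable_on {s..t}"
    using integrable_on_subinterval[OF F_int] assms(1,2) by auto
  then have "integral {s..t} y' \<le> integral {s..t} F"
    using y'_int y'_le by (intro integral_le)
  also have "\<dots> \<le> integral {t0..t} F"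
    using F_int F_nonneg assms(1,2) by (intro integral_subinterval_le) auto
  finally show ?thesis
    using y_incr by simp
qed

lemma lower_bound_le_average:
  fixes y :: "real \<Rightarrow> real"
  assumes "r > 0" "y integrable_on {t-r..t}"
    and "\<And>s. s \<in> {t-r<..<t} \<Longrightarrow> c \<le> y s"
  shows "c \<le> integral {t-r..t} y / r"
proof -
  have "integral {t-r..t} (\<lambda>_. c) \<le> integral {t-r..t} y"
    using assms by (intro integral_le_Ioo) auto
  with \<open>r > 0\<close> show ?thesis
    by (simp add: field_simps)
qed

lemma inverse_min_one_le:
  fixes a d :: real
  assumes "a \<ge> 0" "d > 0"
  shows "a / min 1 d \<le> a / d + a"
  using assms by (cases "d \<le> 1") (auto simp: min_def field_simps)

theorem mainTheorem18:
  fixes t0 a1 a2 a3 :: real and g h y y' P :: "real \<Rightarrow> real"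
  assumes g_nonneg: "\<And>t. t > t0 \<Longrightarrow> g t \<ge> 0"
    and h_nonneg: "\<And>t. t > t0 \<Longrightarrow> h t \<ge> 0"
    and y_nonneg: "\<And>t. t > t0 \<Longrightarrow> y t \<ge> 0"
    and g_int: "\<And>b. g integrable_on {t0..b}"
    and h_int: "\<And>b. h integrable_on {t0..b}"
    and y_int: "\<And>b. y integrable_on {t0..b}"
    and y'_int: "\<And>a b. t0 < a \<Longrightarrow> y' integrable_on {a..b}"
    and y_weak_deriv: "\<And>a b. t0 < a \<Longrightarrow> a \<le> b \<Longrightarrow> y b - y a = integral {a..b} y'"
    and diff_ineq: "\<And>t. t \<ge> t0 \<Longrightarrow> y' t \<le> g t * y t + h t"
    and a_nonneg: "a1 \<ge> 0" "a2 \<ge> 0" "a3 \<ge> 0"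
    and g_win: "\<And>t. t \<ge> t0 \<Longrightarrow> integral {t..t+1} g \<le> a1"
    and h_win: "\<And>t. t \<ge> t0 \<Longrightarrow> integral {t..t+1} h \<le> a2"
    and y_win: "\<And>t. t \<ge> t0 \<Longrightarrow> integral {t..t+1} y \<le> a3"
    and gyh_int: "\<And>t. t > t0 \<Longrightarrow> (\<lambda>s. g s * y s + h s) integrable_on {t0..t}"
    and P_bound: "\<And>t. t > t0 \<Longrightarrow> integral {t0..t} (\<lambda>s. g s * y s + h s) \<le> P t"
    and P_nonneg: "\<And>t. t > t0 \<Longrightarrow> P t \<ge> 0"
  shows "\<And>t. t > t0 \<Longrightarrow> y t \<le> (a3 / (t - t0) + 2 * a2 + a3) * exp a1 + P t"
proof -
  fix t assume "t > t0"
  define r where "r = min 1 (t - t0)"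
  have r: "r > 0" "t0 \<le> t - r" "r \<le> 1"
    using \<open>t > t0\<close> by (auto simp: r_def)
  have y_int_win: "y integrable_on {t-r..t-r+1}"
    using integrable_on_subinterval[OF y_int] r by auto
  have lower: "y t - P t \<le> y s" if s: "s \<in> {t-r<..<t}" for s
  proof -
    have "t0 < s" "s \<le> t"
      using s r by auto
    then have "y t - y s \<le> integral {t0..t} (\<lambda>s. g s * y s + h s)"
      using \<open>t > t0\<close> g_nonneg h_nonneg y_nonneg diff_ineq
      by (intro weak_solution_increment_le[where y' = y'] y_weak_deriv y'_int gyh_int) auto
    then show ?thesis
      using P_bound[OF \<open>t > t0\<close>] by linarith
  qed
  have "integral {t-r..t} y \<le> integral {t-r..t-r+1} y"
    using y_int_win y_nonneg r by (intro integral_subinterval_le) auto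
  then have window_le: "integral {t-r..t} y \<le> a3"
    using y_win[of "t-r"] r by simp
  have "y t - P t \<le> integral {t-r..t} y / r"
    using lower r y_int_win
      integrable_on_subinterval[OF y_int_win, of "t-r" t]
    by (intro lower_bound_le_average) auto
  also have "\<dots> \<le> a3 / r"
    using window_le r by (simp add: divide_right_mono)
  also have "\<dots> \<le> a3 / (t - t0) + 2 * a2 + a3"
    using inverse_min_one_le[of a3 "t - t0"] a_nonneg \<open>t > t0\<close> by (simp add: r_def)
  also have "\<dots> \<le> (a3 / (t - t0) + 2 * a2 + a3) * exp a1"
  proof -
    have "0 \<le> a3 / (t - t0)"
      using a_nonneg \<open>t > t0\<close> by simp
    then have "0 \<le> a3 / (t - t0) + 2 * a2 + a3"
      using a_nonneg by linarith
    then show ?thesis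
      using mult_left_mono[of 1 "exp a1"] a_nonneg by simp
  qed
  finally show "y t \<le> (a3 / (t - t0) + 2 * a2 + a3) * exp a1 + P t"
    by simp
qed

end
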